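(* The Lebesgue measure $\mu$ of the set $\{xy : x,y\in C\}$ satisfies $\mu(\{xy : x,y\in C\}) \ge \tfrac{17}{21}$.
   Context: $C=\{\sum_{k\ge1}\alpha_k3^{-k}:\alpha_k\in\{0,2\}\}$ is the middle-thirds Cantor set. *)

theory Defs
  imports "HOL-Analysis.Analysis"
begin

text \<open>The middle-thirds Cantor set: all sums \<Sum>_{k\<ge>1} a_k 3^{-k} with a_k \<in> {0,2}.
  Digits are indexed from 0 here: a k stands for alpha_(k+1).\<close>
definition cantor_set :: "real set" where
  "cantor_set = {(\<Sum>k. a k / 3 ^ (Suc k)) | a :: nat \<Rightarrow> real. \<forall>k. a k \<in> {0, 2}}"

definition cantor_product_set :: "real set" where
  "cantor_product_set = {x * y | x y. x \<in> cantor_set \<and> y \<in> cantor_set}"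

end

theory Submission
  imports Defs "HOL-Library.Set_Algebras"
begin

(* For every k the set C * C contains 3^-k * A * A, where A = 2/3 + C/3 is the right third of C,
   so it suffices to bound the part of [t a^2, t (a+s)^2] missed by t * (a + s C)^2.  Splitting
   a + s C into its two thirds, the products of the left third with the right third fill the
   interval between the two diagonal product intervals up to a gap of length t s^2/9: a
   nested-interval argument shows that two scaled Cantor sets whose positions satisfy
   thirds_admissible multiply onto a whole interval.  Hence the missed measure u(s) satisfies
   u(s) <= 2 u(s/3) + t s^2/9, i.e. u(s) <= t s^2/7.  The triadic block [3^-(k+1), 3^-k] thus
   misses at most 3^-k (1/9 + 1/63) = 8/63 * 3^-k, and these sum to 4/21 over k. *)

lemma norm_cantor_digit_term_le: "d \<in> {0, 2::real} \<Longrightarrow> norm (d / 3 ^ Suc k) \<le> 2 * (1/3) ^ k"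
  by (auto simp: power_divide divide_simps)

lemma summable_cantor_digits:
  assumes "\<forall>k. d k \<in> {0, 2::real}"
  shows "summable (\<lambda>k. d k / 3 ^ Suc k)"
  by (rule summable_comparison_test[where g = "\<lambda>k. 2 * (1/3) ^ k"])
     (use assms norm_cantor_digit_term_le in \<open>auto intro: summable_mult summable_geometric\<close>)

lemma continuous_on_cantor_digit_series:
  "continuous_on {d. \<forall>k. d k \<in> {0, 2::real}} (\<lambda>d. \<Sum>k. d k / 3 ^ Suc k)"
proof (rule uniform_limit_theorem)
  show "uniform_limit {d. \<forall>k. d k \<in> {0, 2::real}} (\<lambda>n d. \<Sum>k<n. d k / 3 ^ Suc k)
      (\<lambda>d. \<Sum>k. d k / 3 ^ Suc k) sequentially"
    by (rule Weierstrass_m_test[where M = "\<lambda>k. 2 * (1/3) ^ k"])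
       (use norm_cantor_digit_term_le in \<open>auto intro: summable_mult summable_geometric\<close>)
  have "continuous_on {d. \<forall>k. d k \<in> {0, 2::real}} (\<lambda>d. d i)" for i
    by (rule continuous_on_subset[OF continuous_on_product_coordinates]) simp
  then show "\<forall>\<^sub>F n in sequentially.
      continuous_on {d. \<forall>k. d k \<in> {0, 2::real}} (\<lambda>d. \<Sum>k<n. d k / 3 ^ Suc k)"
    by (intro always_eventually allI continuous_on_sum continuous_on_divide continuous_on_const) auto
qed simp

lemma compact_cantor_set: "compact cantor_set"
proof -
  have "compactin (product_topology (\<lambda>_. euclidean) UNIV) (PiE UNIV (\<lambda>_::nat. {0::real, 2}))"
    by (subst compactin_PiE) auto
  moreover have "PiE UNIV (\<lambda>_::nat. {0::real, 2}) = {d. \<forall>k. d k \<in> {0, 2}}"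
    by (auto simp: PiE_def)
  ultimately have "compact {d :: nat \<Rightarrow> real. \<forall>k. d k \<in> {0, 2}}"
    by (simp add: euclidean_product_topology)
  moreover have "cantor_set = (\<lambda>d. \<Sum>k. d k / 3 ^ Suc k) ` {d. \<forall>k. d k \<in> {0, 2}}"
    unfolding cantor_set_def by auto
  ultimately show ?thesis
    using compact_continuous_image[OF continuous_on_cantor_digit_series] by simp
qed

lemma zero_in_cantor_set: "0 \<in> cantor_set"
  unfolding cantor_set_def by (rule CollectI, rule exI[of _ "\<lambda>_. 0"]) simp

lemma cantor_set_prepend_digit:
  assumes x: "x \<in> cantor_set" and i: "i \<in> {0, 2::real}"
  shows "(i + x) / 3 \<in> cantor_set"
proof -
  obtain d where d: "\<forall>k. d k \<in> {0, 2}" and x_eq: "x = (\<Sum>k. d k / 3 ^ Suc k)"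
    using x unfolding cantor_set_def by blast
  define e where "e = case_nat i d"
  have e: "\<forall>k. e k \<in> {0, 2}"
    using d i by (auto simp: e_def split: nat.split)
  have "(\<Sum>k. e k / 3 ^ Suc k) = i / 3 + (\<Sum>k. d k / 3 ^ Suc k) / 3"
    using suminf_split_head[OF summable_cantor_digits[OF e]]
      suminf_divide[OF summable_cantor_digits[OF d], of 3]
    by (simp add: e_def)
  then show ?thesis
    using e x_eq unfolding cantor_set_def by (intro CollectI exI[of _ e]) simp
qed

definition cantor_copy :: "real \<Rightarrow> real \<Rightarrow> real set" where
  "cantor_copy a s = (\<lambda>c. a + s * c) ` cantor_set"

lemma cantor_copy_0_1 [simp]: "cantor_copy 0 1 = cantor_set"
  by (simp add: cantor_copy_def)

lemma compact_cantor_copy: "compact (cantor_copy a s)"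
  unfolding cantor_copy_def
  by (intro compact_continuous_image continuous_intros compact_cantor_set)

lemma left_endpoint_in_cantor_copy: "a \<in> cantor_copy a s"
  unfolding cantor_copy_def using zero_in_cantor_set by force

lemma cantor_copy_third_subset:
  assumes "i \<in> {0, 2::real}"
  shows "cantor_copy (a + i * (s/3)) (s/3) \<subseteq> cantor_copy a s"
proof
  fix x assume "x \<in> cantor_copy (a + i * (s/3)) (s/3)"
  then obtain c where "c \<in> cantor_set" and x: "x = a + s * ((i + c) / 3)"
    unfolding cantor_copy_def by (auto simp: algebra_simps)
  then show "x \<in> cantor_copy a s"
    using cantor_set_prepend_digit assms unfolding cantor_copy_def by blast
qed

lemma compact_set_times:
  fixes A B :: "'a::real_normed_algebra set"
  assumes "compact A" "compact B"
  shows "compact (A * B)"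
proof -
  have "A * B = (\<lambda>p. fst p * snd p) ` (A \<times> B)"
    unfolding set_times_def by force
  then show ?thesis
    by (simp add: assms compact_Times compact_continuous_image continuous_intros)
qed

text \<open>The condition under which the product interval of two intervals of length \<open>s\<close> is
  covered by the four product intervals of their outer thirds, and which is inherited by
  each of these four pairs of thirds.\<close>
definition thirds_admissible :: "real \<Rightarrow> real \<Rightarrow> real \<Rightarrow> bool" where
  "thirds_admissible a b s \<longleftrightarrow>
     0 < s \<and> 0 < a \<and> 0 < b \<and> 2 * s \<le> \<bar>a - b\<bar> \<and> max a b + s \<le> 3 * min a b"

lemma thirds_admissible_commute: "thirds_admissible a b s \<longleftrightarrow> thirds_admissible b a s"
  unfolding thirds_admissible_def by (auto simp: abs_minus_commute max.commute min.commute)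

lemma thirds_admissible_thirds:
  assumes "thirds_admissible a b s" "i \<in> {0, 2}" "j \<in> {0, 2}"
  shows "thirds_admissible (a + i * (s/3)) (b + j * (s/3)) (s/3)"
  using assms unfolding thirds_admissible_def
  by (cases "a \<le> b") (auto simp: abs_if max_def min_def split: if_splits)

lemma product_interval_cover_thirds_lt:
  assumes "thirds_admissible a b s" "a < b" "z \<in> {a * b .. (a + s) * (b + s)}"
  shows "\<exists>i\<in>{0, 2}. \<exists>j\<in>{0, 2}.
    z \<in> {(a + i * (s/3)) * (b + j * (s/3)) .. (a + i * (s/3) + s/3) * (b + j * (s/3) + s/3)}"
proof -
  define h where "h = s / 3"
  have h: "0 < h" "a + 6 * h \<le> b" "b + 3 * h \<le> 3 * a"
    using assms(1,2) unfolding thirds_admissible_def h_def by auto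
  have z: "a * b \<le> z" "z \<le> (a + 3 * h) * (b + 3 * h)"
    using assms(3) unfolding h_def by auto
  \<comment> \<open>The intervals for (i, j) = (0,0), (0,2), (2,0), (2,2) overlap consecutively.\<close>
  have chain1: "a * (b + 2 * h) \<le> (a + h) * (b + h)"
    using h mult_nonneg_nonneg[of h "b - a + h"] by (simp add: algebra_simps)
  have chain2: "(a + 2 * h) * b \<le> (a + h) * (b + 3 * h)"
    using h mult_nonneg_nonneg[of h "3 * a + 3 * h - b"] by (simp add: algebra_simps)
  have chain3: "(a + 2 * h) * (b + 2 * h) \<le> (a + 3 * h) * (b + h)"
    using h mult_nonneg_nonneg[of h "b - a - h"] by (simp add: algebra_simps)
  have "\<exists>i\<in>{0, 2}. \<exists>j\<in>{0, 2}. z \<in> {(a + i * h) * (b + j * h) .. (a + i * h + h) * (b + j * h + h)}"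
  proof (cases "z \<le> (a + h) * (b + h)")
    case True
    then show ?thesis using z by force
  next
    case gt1: False
    show ?thesis
    proof (cases "z \<le> (a + h) * (b + 3 * h)")
      case True
      with gt1 chain1 have "z \<in> {a * (b + 2 * h) .. (a + h) * (b + 3 * h)}" by auto
      then show ?thesis by - (rule bexI[of _ 0], rule bexI[of _ 2], auto simp: algebra_simps)
    next
      case gt2: False
      show ?thesis
      proof (cases "z \<le> (a + 3 * h) * (b + h)")
        case True
        with gt2 chain2 have "z \<in> {(a + 2 * h) * b .. (a + 3 * h) * (b + h)}" by auto
        then show ?thesis by - (rule bexI[of _ 2], rule bexI[of _ 0], auto simp: algebra_simps)
      next
        case False
        with z chain3 have "z \<in> {(a + 2 * h) * (b + 2 * h) .. (a + 3 * h) * (b + 3 * h)}" by auto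
        then show ?thesis by - (rule bexI[of _ 2], rule bexI[of _ 2], auto simp: algebra_simps)
      qed
    qed
  qed
  then show ?thesis unfolding h_def by simp
qed

lemma product_interval_cover_thirds:
  assumes "thirds_admissible a b s" "z \<in> {a * b .. (a + s) * (b + s)}"
  shows "\<exists>i\<in>{0, 2}. \<exists>j\<in>{0, 2}.
    z \<in> {(a + i * (s/3)) * (b + j * (s/3)) .. (a + i * (s/3) + s/3) * (b + j * (s/3) + s/3)}"
proof (cases "a < b")
  case True
  then show ?thesis using product_interval_cover_thirds_lt assms by blast
next
  case False
  then have "b < a" using assms(1) unfolding thirds_admissible_def by auto
  moreover have "z \<in> {b * a .. (b + s) * (a + s)}" using assms(2) by (simp add: mult.commute)
  ultimately show ?thesis
    using product_interval_cover_thirds_lt[of b a s z] assms(1)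
    by (auto simp: thirds_admissible_commute mult.commute)
qed

lemma cantor_copy_products_approximate:
  assumes "thirds_admissible a b s" "z \<in> {a * b .. (a + s) * (b + s)}"
  shows "\<exists>p \<in> cantor_copy a s * cantor_copy b s. dist p z \<le> (a + b + 3 * s) * s / 3 ^ n"
  using assms
proof (induction n arbitrary: a b s)
  case 0
  have "a * b \<in> cantor_copy a s * cantor_copy b s"
    by (intro set_times_intro left_endpoint_in_cantor_copy)
  moreover have "dist (a * b) z \<le> (a + b + s) * s"
    using 0 unfolding dist_real_def by (auto simp: algebra_simps)
  moreover have "(a + b + s) * s \<le> (a + b + 3 * s) * s"
    using 0 unfolding thirds_admissible_def by (intro mult_right_mono) auto
  ultimately show ?case by force
next
  case (Suc n)
  obtain i j where ij: "i \<in> {0, 2}" "j \<in> {0, 2}" and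
    z: "z \<in> {(a + i * (s/3)) * (b + j * (s/3)) .. (a + i * (s/3) + s/3) * (b + j * (s/3) + s/3)}"
    using product_interval_cover_thirds[OF Suc.prems] by blast
  obtain p where p: "p \<in> cantor_copy (a + i * (s/3)) (s/3) * cantor_copy (b + j * (s/3)) (s/3)"
    and dist_p: "dist p z \<le> (a + i * (s/3) + (b + j * (s/3)) + 3 * (s/3)) * (s/3) / 3 ^ n"
    using Suc.IH[OF thirds_admissible_thirds[OF Suc.prems(1) ij] z] by blast
  have "p \<in> cantor_copy a s * cantor_copy b s"
    using p set_times_mono2[OF cantor_copy_third_subset cantor_copy_third_subset] ij by blast
  moreover have "(a + i * (s/3) + (b + j * (s/3)) + 3 * (s/3)) * (s/3) / 3 ^ n
      \<le> (a + b + 3 * s) * s / 3 ^ Suc n"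
    using ij Suc.prems(1) unfolding thirds_admissible_def
    by (auto simp: field_simps)
  ultimately show ?case using dist_p by force
qed

lemma cantor_copy_products_cover:
  assumes "thirds_admissible a b s"
  shows "{a * b .. (a + s) * (b + s)} \<subseteq> cantor_copy a s * cantor_copy b s"
proof
  fix z assume z: "z \<in> {a * b .. (a + s) * (b + s)}"
  have "\<exists>p \<in> cantor_copy a s * cantor_copy b s. dist p z < \<epsilon>" if "\<epsilon> > 0" for \<epsilon>
  proof -
    define c where "c = (a + b + 3 * s) * s"
    have "c > 0" using assms unfolding thirds_admissible_def c_def by auto
    then obtain n where "(1/3) ^ n < \<epsilon> / c"
      using real_arch_pow_inv[of "\<epsilon> / c" "1/3"] \<open>\<epsilon> > 0\<close> by auto
    then have "c / 3 ^ n < \<epsilon>"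
      using \<open>c > 0\<close> by (simp add: field_simps)
    then show ?thesis
      using cantor_copy_products_approximate[OF assms z, of n] unfolding c_def by force
  qed
  then show "z \<in> cantor_copy a s * cantor_copy b s"
    using closed_approachable[OF compact_imp_closed[OF compact_set_times]] compact_cantor_copy
    by blast
qed

definition cantor_square_gap :: "real \<Rightarrow> real \<Rightarrow> real \<Rightarrow> real set" where
  "cantor_square_gap t a s = {t * a^2 .. t * (a + s)^2} - t *o (cantor_copy a s * cantor_copy a s)"

lemma lmeasurable_cantor_square_gap: "cantor_square_gap t a s \<in> lmeasurable"
proof -
  have "t *o (cantor_copy a s * cantor_copy a s) = {t} * (cantor_copy a s * cantor_copy a s)"
    unfolding elt_set_times_def set_times_def by auto
  then have "compact (t *o (cantor_copy a s * cantor_copy a s))"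
    by (simp add: compact_set_times compact_cantor_copy)
  then show ?thesis
    unfolding cantor_square_gap_def
    by (intro bounded_set_imp_lmeasurable sets.Diff bounded_subset[OF bounded_closed_interval])
       (auto intro: fmeasurableD lmeasurable_compact)
qed

lemma middle_products_subset_cantor_square:
  assumes "0 < t" "0 < s" "s \<le> 2 * a"
  shows "{t * (a * (a + 2 * s / 3)) .. t * ((a + s / 3) * (a + s))}
    \<subseteq> t *o (cantor_copy a s * cantor_copy a s)"
proof
  fix z assume z: "z \<in> {t * (a * (a + 2 * s / 3)) .. t * ((a + s / 3) * (a + s))}"
  have "thirds_admissible a (a + 2 * (s/3)) (s/3)"
    using assms unfolding thirds_admissible_def by auto
  moreover have "z / t \<in> {a * (a + 2 * (s/3)) .. (a + s/3) * (a + 2 * (s/3) + s/3)}"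
    using z assms(1) by (auto simp: field_simps)
  ultimately have "z / t \<in> cantor_copy a (s/3) * cantor_copy (a + 2 * (s/3)) (s/3)"
    using cantor_copy_products_cover by blast
  moreover have "cantor_copy a (s/3) \<subseteq> cantor_copy a s"
    using cantor_copy_third_subset[of 0 a s] by simp
  moreover have "cantor_copy (a + 2 * (s/3)) (s/3) \<subseteq> cantor_copy a s"
    by (rule cantor_copy_third_subset) simp
  ultimately have "z / t \<in> cantor_copy a s * cantor_copy a s"
    using set_times_mono2 by blast
  then show "z \<in> t *o (cantor_copy a s * cantor_copy a s)"
    using assms(1) set_times_intro2[of "z / t" _ t] by simp
qed

lemma cantor_square_gap_subset_thirds:
  assumes "0 < t" "0 < s" "s \<le> 2 * a"
  shows "cantor_square_gap t a s \<subseteq> cantor_square_gap t a (s/3)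
    \<union> {t * ((a + s/3) * (a + s)) .. t * (a + 2 * s / 3)^2}
    \<union> cantor_square_gap t (a + 2 * s / 3) (s/3)"
proof
  fix z assume z: "z \<in> cantor_square_gap t a s"
  have left: "t *o (cantor_copy a (s/3) * cantor_copy a (s/3))
      \<subseteq> t *o (cantor_copy a s * cantor_copy a s)"
    using cantor_copy_third_subset[of 0 a s] by (intro set_times_mono set_times_mono2) simp_all
  have right: "t *o (cantor_copy (a + 2 * s / 3) (s/3) * cantor_copy (a + 2 * s / 3) (s/3))
      \<subseteq> t *o (cantor_copy a s * cantor_copy a s)"
    using cantor_copy_third_subset[of 2 a s] by (intro set_times_mono set_times_mono2) simp_all
  have "t * (a * (a + 2 * s / 3)) \<le> t * (a + s/3)^2"
    using assms(1) by (intro mult_left_mono) (auto simp: algebra_simps power2_eq_square)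
  then have "{t * (a + s/3)^2 .. t * ((a + s / 3) * (a + s))}
      \<subseteq> t *o (cantor_copy a s * cantor_copy a s)"
    using middle_products_subset_cantor_square[OF assms] by auto
  then have "z \<notin> {t * (a + s/3)^2 .. t * ((a + s / 3) * (a + s))}"
    using z unfolding cantor_square_gap_def by blast
  then show "z \<in> cantor_square_gap t a (s/3)
      \<union> {t * ((a + s/3) * (a + s)) .. t * (a + 2 * s / 3)^2}
      \<union> cantor_square_gap t (a + 2 * s / 3) (s/3)"
    using z left right unfolding cantor_square_gap_def by (auto simp: add_ac)
qed

text \<open>The recursion of the gap measure unrolled \<open>n\<close> times; the last term bounds the
  \<open>2^n\<close> remaining gaps of length-\<open>s/3^n\<close> pieces trivially.\<close>
lemma measure_cantor_square_gap_le_geometric: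
  assumes "0 < t" "0 < s" "s \<le> 2 * a"
  shows "measure lebesgue (cantor_square_gap t a s) \<le> t * (s^2 / 7 + 2 * s * (a + s) * (2/3) ^ n)"
  using assms
proof (induction n arbitrary: a s)
  case 0
  have "measure lebesgue (cantor_square_gap t a s) \<le> measure lebesgue {t * a^2 .. t * (a + s)^2}"
    by (rule measure_mono_fmeasurable[OF _ fmeasurableD[OF lmeasurable_cantor_square_gap]])
       (auto simp: cantor_square_gap_def)
  also have "\<dots> = t * (s * (2 * a + s))"
    using 0 by (simp add: algebra_simps power2_eq_square)
  also have "\<dots> \<le> t * (s^2 / 7 + 2 * s * (a + s))"
    using 0 by (intro mult_left_mono) (auto simp: algebra_simps power2_eq_square)
  finally show ?case by simp
next
  case (Suc n)
  let ?L = "cantor_square_gap t a (s/3)"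
  let ?M = "{t * ((a + s/3) * (a + s)) .. t * (a + 2 * s / 3)^2}"
  let ?R = "cantor_square_gap t (a + 2 * s / 3) (s/3)"
  have "measure lebesgue ?L \<le> t * ((s/3)^2 / 7 + 2 * (s/3) * (a + s/3) * (2/3) ^ n)"
    using Suc by (intro Suc.IH) auto
  also have "\<dots> \<le> t * ((s/3)^2 / 7 + 2 * (s/3) * (a + s) * (2/3) ^ n)"
    using Suc.prems by (intro mult_left_mono add_left_mono mult_right_mono) auto
  finally have L: "measure lebesgue ?L \<le> t * ((s/3)^2 / 7 + 2 * (s/3) * (a + s) * (2/3) ^ n)" .
  have R: "measure lebesgue ?R \<le> t * ((s/3)^2 / 7 + 2 * (s/3) * (a + s) * (2/3) ^ n)"
    using Suc.IH[of "s/3" "a + 2 * s / 3"] Suc.prems by (simp add: add_ac)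
  have M: "measure lebesgue ?M = t * (s^2 / 9)"
  proof -
    have "t * (a + 2 * s / 3)^2 - t * ((a + s/3) * (a + s)) = t * (s^2 / 9)"
      by (simp add: field_simps power2_eq_square)
    moreover have "0 \<le> t * (s^2 / 9)"
      using Suc.prems by simp
    ultimately show ?thesis by simp
  qed
  have "measure lebesgue (cantor_square_gap t a s) \<le> measure lebesgue (?L \<union> ?M \<union> ?R)"
    using cantor_square_gap_subset_thirds[OF Suc.prems] lmeasurable_cantor_square_gap
    by (intro measure_mono_fmeasurable fmeasurable.Un) (auto intro: fmeasurableD)
  also have "\<dots> \<le> measure lebesgue ?L + measure lebesgue ?M + measure lebesgue ?R"
    using lmeasurable_cantor_square_gap
    by (intro order.trans[OF measure_Un_le] add_right_mono measure_Un_le)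
       (auto intro: fmeasurableD)
  also have "\<dots> \<le> t * ((s/3)^2 / 7 + 2 * (s/3) * (a + s) * (2/3) ^ n) + t * (s^2 / 9)
      + t * ((s/3)^2 / 7 + 2 * (s/3) * (a + s) * (2/3) ^ n)"
    using L M R by (intro add_mono) auto
  also have "\<dots> = t * (s^2 / 7 + 2 * s * (a + s) * (2/3) ^ Suc n)"
    by (simp add: field_simps power2_eq_square)
  finally show ?case .
qed

lemma measure_cantor_square_gap_le:
  assumes "0 < t" "0 < s" "s \<le> 2 * a"
  shows "measure lebesgue (cantor_square_gap t a s) \<le> t * (s^2 / 7)"
proof -
  have "(\<lambda>n. t * (s^2 / 7 + 2 * s * (a + s) * (2/3) ^ n)) \<longlonglongrightarrow> t * (s^2 / 7 + 2 * s * (a + s) * 0)"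
    by (intro tendsto_intros LIMSEQ_realpow_zero) auto
  then have "measure lebesgue (cantor_square_gap t a s) \<le> t * (s^2 / 7 + 2 * s * (a + s) * 0)"
    using measure_cantor_square_gap_le_geometric[OF assms] by (intro LIMSEQ_le_const) auto
  then show ?thesis by simp
qed

lemma cantor_product_set_eq: "cantor_product_set = cantor_set * cantor_set"
  unfolding cantor_product_set_def set_times_def by auto

lemma lmeasurable_cantor_product_set: "cantor_product_set \<in> lmeasurable"
  unfolding cantor_product_set_eq
  by (intro lmeasurable_compact compact_set_times compact_cantor_set)

lemma cantor_set_scaled_subset: "((1/3) ^ k) *o cantor_set \<subseteq> cantor_set"
proof (induction k)
  case 0
  show ?case by (auto simp: elt_set_times_def)
next
  case (Suc k)
  have "(1/3) *o cantor_set \<subseteq> cantor_set"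
  proof
    fix x assume "x \<in> (1/3) *o cantor_set"
    then obtain c where "c \<in> cantor_set" "x = (0 + c) / 3"
      by (auto simp: elt_set_times_def)
    then show "x \<in> cantor_set"
      using cantor_set_prepend_digit by blast
  qed
  then show ?case
    using set_times_mono[OF Suc.IH, of "1/3"] by (auto simp: set_times_rearrange2)
qed

lemma scaled_cantor_square_subset_cantor_product_set:
  "((1/3) ^ k) *o (cantor_copy (2/3) (1/3) * cantor_copy (2/3) (1/3)) \<subseteq> cantor_product_set"
proof -
  have "cantor_copy (2/3) (1/3) \<subseteq> cantor_set"
    using cantor_copy_third_subset[of 2 0 1] by simp
  then have "((1/3) ^ k) *o cantor_copy (2/3) (1/3) \<subseteq> cantor_set"
    using cantor_set_scaled_subset by (meson order.trans set_times_mono)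
  then show ?thesis
    using \<open>cantor_copy (2/3) (1/3) \<subseteq> cantor_set\<close>
    unfolding cantor_product_set_eq set_times_rearrange3[symmetric] by (rule set_times_mono2)
qed

definition triadic_block :: "nat \<Rightarrow> real set" where
  "triadic_block k = {(1/3) ^ Suc k .. (1/3) ^ k}"

lemma triadic_block_exists:
  fixes x :: real
  assumes "0 < x" "x \<le> 1"
  shows "\<exists>k. x \<in> triadic_block k"
proof -
  obtain n where "(1/3) ^ n < x"
    using real_arch_pow_inv[of x "1/3"] assms by auto
  then show ?thesis
  proof (induction n)
    case 0
    then show ?case using assms by simp
  next
    case (Suc n)
    show ?case
    proof (cases "(1/3) ^ n < x")
      case True
      then show ?thesis using Suc.IH by blast
    next
      case False
      then have "x \<in> triadic_block n" using Suc.prems by (auto simp: triadic_block_def)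
      then show ?thesis by blast
    qed
  qed
qed

lemma unit_interval_subset_cantor_product_set_Un_blocks:
  "{0..1} \<subseteq> cantor_product_set \<union> (\<Union>k. triadic_block k - cantor_product_set)"
proof
  fix x :: real assume x: "x \<in> {0..1}"
  show "x \<in> cantor_product_set \<union> (\<Union>k. triadic_block k - cantor_product_set)"
  proof (cases "x = 0")
    case True
    then show ?thesis
      unfolding cantor_product_set_def using zero_in_cantor_set by force
  next
    case False
    then show ?thesis using triadic_block_exists x by force
  qed
qed

lemma measure_triadic_block_diff_cantor_product_set:
  "measure lebesgue (triadic_block k - cantor_product_set) \<le> 8/63 * (1/3) ^ k"
proof -
  define t :: real where "t = (1/3) ^ k"
  have t: "0 < t" by (simp add: t_def)
  have "triadic_block k - cantor_product_set \<subseteq> {t/3 .. 4/9 * t} \<union> cantor_square_gap t (2/3) (1/3)"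
    using scaled_cantor_square_subset_cantor_product_set[of k]
    unfolding cantor_square_gap_def triadic_block_def t_def by (auto simp: power2_eq_square)
  then have "measure lebesgue (triadic_block k - cantor_product_set)
      \<le> measure lebesgue ({t/3 .. 4/9 * t} \<union> cantor_square_gap t (2/3) (1/3))"
    using lmeasurable_cantor_product_set lmeasurable_cantor_square_gap
    by (intro measure_mono_fmeasurable) (auto simp: triadic_block_def intro: fmeasurableD)
  also have "\<dots> \<le> measure lebesgue {t/3 .. 4/9 * t} + measure lebesgue (cantor_square_gap t (2/3) (1/3))"
    using lmeasurable_cantor_square_gap by (intro measure_Un_le) (auto intro: fmeasurableD)
  also have "\<dots> \<le> (4/9 * t - t/3) + t * ((1/3)^2 / 7)"
    using t by (intro add_mono measure_cantor_square_gap_le) auto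
  also have "\<dots> = 8/63 * t" by (simp add: power2_eq_square)
  finally show ?thesis by (simp add: t_def)
qed

lemma
  shows fmeasurable_UN_triadic_blocks_diff:
      "(\<Union>k. triadic_block k - cantor_product_set) \<in> lmeasurable"
    and measure_UN_triadic_blocks_diff_le:
      "measure lebesgue (\<Union>k. triadic_block k - cantor_product_set) \<le> 4/21"
proof -
  have blocks: "triadic_block k - cantor_product_set \<in> lmeasurable" for k
    unfolding triadic_block_def using lmeasurable_cantor_product_set
    by (intro bounded_set_imp_lmeasurable sets.Diff bounded_subset[OF bounded_closed_interval])
       (auto intro: fmeasurableD)
  have geometric: "(\<lambda>k. 8/63 * (1/3::real) ^ k) sums (8/63 * (1 / (1 - 1/3)))"
    by (intro sums_mult geometric_sums) simp
  have finite_unions: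
    "measure lebesgue (\<Union>k\<in>I. triadic_block k - cantor_product_set) \<le> 4/21" if "finite I" for I
  proof -
    have "measure lebesgue (\<Union>k\<in>I. triadic_block k - cantor_product_set)
        \<le> (\<Sum>k\<in>I. measure lebesgue (triadic_block k - cantor_product_set))"
      using blocks by (intro measure_UNION_le[OF that]) (auto intro: fmeasurableD)
    also have "\<dots> \<le> (\<Sum>k\<in>I. 8/63 * (1/3) ^ k)"
      by (intro sum_mono measure_triadic_block_diff_cantor_product_set)
    also have "\<dots> \<le> (\<Sum>k. 8/63 * (1/3) ^ k)"
      by (intro sum_le_suminf sums_summable[OF geometric] that) simp
    also have "\<dots> = 4/21"
      using sums_unique[OF geometric] by simp
    finally show ?thesis .
  qed
  show "(\<Union>k. triadic_block k - cantor_product_set) \<in> lmeasurable"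
    by (rule fmeasurable_UN_bound[OF _ blocks finite_unions]) simp
  show "measure lebesgue (\<Union>k. triadic_block k - cantor_product_set) \<le> 4/21"
    by (rule measure_UN_bound[OF _ blocks finite_unions]) simp
qed

theorem theorem3p9:
  shows "measure lebesgue cantor_product_set \<ge> 17 / 21"
proof -
  let ?E = "\<Union>k. triadic_block k - cantor_product_set"
  have "1 = measure lebesgue {0..1::real}"
    by simp
  also have "\<dots> \<le> measure lebesgue (cantor_product_set \<union> ?E)"
    using unit_interval_subset_cantor_product_set_Un_blocks
      lmeasurable_cantor_product_set fmeasurable_UN_triadic_blocks_diff
    by (intro measure_mono_fmeasurable fmeasurable.Un) auto
  also have "\<dots> \<le> measure lebesgue cantor_product_set + measure lebesgue ?E"
    using lmeasurable_cantor_product_set fmeasurable_UN_triadic_blocks_diff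
    by (intro measure_Un_le) (auto intro: fmeasurableD)
  finally show ?thesis
    using measure_UN_triadic_blocks_diff_le by linarith
qed

end
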